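(* Let $a_1,\dots,a_q,b_1,\dots,b_q>0$ and \[ R(x)=\frac{\prod_{k=1}^{q}(a_k+x)}{\prod_{k=1}^{q}(b_k+x)}. \] Then $R$ is monotone increasing on $(0,\infty)$ if \[ \frac{e_q(b_1,\ldots,b_q)}{e_q(a_1,\ldots,a_q)}\ge\frac{e_{q-1}(b_1,\ldots,b_q)}{e_{q-1}(a_1,\ldots,a_q)}\ge\cdots\ge\frac{e_1(b_1,\ldots,b_q)}{e_1(a_1,\ldots,a_q)}\ge1, \] and monotone decreasing on $(0,\infty)$ if \[ \frac{e_q(b_1,\ldots,b_q)}{e_q(a_1,\ldots,a_q)}\le\frac{e_{q-1}(b_1,\ldots,b_q)}{e_{q-1}(a_1,\ldots,a_q)}\le\cdots\le\frac{e_1(b_1,\ldots,b_q)}{e_1(a_1,\ldots,a_q)}\le1. \]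
   Context: $e_m(c_1,\dots,c_q)=\sum_{1\le i_1<\cdots<i_m\le q}c_{i_1}\cdots c_{i_m}$ denotes the $m$-th elementary symmetric polynomial ($e_0=1$). *)

theory Defs
  imports "HOL-Analysis.Analysis"
begin

definition esym :: "nat \<Rightarrow> nat \<Rightarrow> (nat \<Rightarrow> real) \<Rightarrow> real" where
  "esym q m c = (\<Sum>S\<in>{S. S \<subseteq> {1..q} \<and> card S = m}. \<Prod>i\<in>S. c i)"

end

theory Submission imports Defs begin

text \<open>Expanding both products in powers of \<open>x\<close> gives \<open>R x = N x / D x\<close> with
  \<open>N x = \<Sum>k. e\<^sub>q\<^sub>-\<^sub>k(a) x\<^sup>k\<close> and \<open>D x = \<Sum>k. e\<^sub>q\<^sub>-\<^sub>k(b) x\<^sup>k\<close>. The chain of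
  ratios (with \<open>e\<^sub>0 = 1\<close> supplying the last link) says that the coefficient ratios
  of \<open>N\<close> and \<open>D\<close> are ordered, \<open>\<alpha>\<^sub>j \<beta>\<^sub>i \<le> \<alpha>\<^sub>i \<beta>\<^sub>j\<close> for \<open>j \<le> i\<close>.
  Then \<open>N x\<^sub>1 D x\<^sub>2 - N x\<^sub>2 D x\<^sub>1\<close>, symmetrised as a double sum, is a sum of terms
  \<open>(\<alpha>\<^sub>i \<beta>\<^sub>j - \<alpha>\<^sub>j \<beta>\<^sub>i)(x\<^sub>1\<^sup>i x\<^sub>2\<^sup>j - x\<^sub>1\<^sup>j x\<^sub>2\<^sup>i)\<close> whose two factors have
  opposite signs when \<open>x\<^sub>1 \<le> x\<^sub>2\<close>. The decreasing case is the increasing case for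
  \<open>1 / R\<close>, obtained by exchanging \<open>a\<close> and \<open>b\<close>.\<close>

lemma esym_0 [simp]: "esym q 0 c = 1"
proof -
  have "{S. S \<subseteq> {1..q} \<and> card S = 0} = {{}}"
    using finite_subset by fastforce
  then show ?thesis by (simp add: esym_def)
qed

lemma esym_pos:
  assumes "\<forall>k\<in>{1..q}. c k > 0" and "m \<le> q"
  shows "esym q m c > 0"
  unfolding esym_def
proof (rule sum_pos)
  have "{1..m} \<in> {S. S \<subseteq> {1..q} \<and> card S = m}" using assms(2) by auto
  then show "{S. S \<subseteq> {1..q} \<and> card S = m} \<noteq> {}" by blast
  fix S assume "S \<in> {S. S \<subseteq> {1..q} \<and> card S = m}"
  then show "0 < prod c S" using assms(1) by (intro prod_pos) auto
qed simp

lemma prod_plus_eq_sum_esym: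
  fixes c :: "nat \<Rightarrow> real"
  shows "(\<Prod>k=1..q. c k + x) = (\<Sum>k=0..q. esym q (q - k) c * x ^ k)"
proof -
  have "(\<Prod>k=1..q. c k + x) = (\<Sum>X\<in>Pow {1..q}. (\<Prod>i\<in>X. c i) * (\<Prod>i\<in>{1..q}-X. x))"
    by (rule prod_add) simp
  also have "\<dots> = (\<Sum>X\<in>Pow {1..q}. (\<Prod>i\<in>X. c i) * x ^ (q - card X))"
    by (intro sum.cong refl) (auto simp: card_Diff_subset finite_subset)
  also have "\<dots> = (\<Sum>m\<in>{0..q}. \<Sum>X\<in>{X. X \<in> Pow {1..q} \<and> card X = m}.
                      (\<Prod>i\<in>X. c i) * x ^ (q - card X))"
    by (rule sum.group[symmetric]) (auto simp: card_mono[of "{1..q}", simplified])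
  also have "\<dots> = (\<Sum>m\<in>{0..q}. esym q m c * x ^ (q - m))"
    unfolding esym_def sum_distrib_right by (intro sum.cong refl) auto
  also have "\<dots> = (\<Sum>k=0..q. esym q (q - k) c * x ^ k)"
    by (rule sum.reindex_bij_witness[of _ "\<lambda>k. q - k" "\<lambda>k. q - k"]) auto
  finally show ?thesis .
qed

lemma prod_plus_pos:
  fixes c :: "nat \<Rightarrow> real"
  assumes "\<forall>k\<in>{1..q}. c k > 0" and "x > 0"
  shows "(\<Prod>k=1..q. c k + x) > 0"
  using assms by (intro prod_pos) (auto intro: add_pos_pos)

lemma power_mult_power_swap_le:
  fixes x y :: real
  assumes "0 \<le> x" "x \<le> y" "j \<le> i"
  shows "x ^ i * y ^ j \<le> x ^ j * y ^ i"
proof -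
  have "x ^ (i - j) \<le> y ^ (i - j)" using assms by (simp add: power_mono)
  then have "x ^ j * x ^ (i - j) * y ^ j \<le> x ^ j * y ^ (i - j) * y ^ j"
    using assms by (intro mult_right_mono mult_left_mono) auto
  then show ?thesis
    using assms(3) by (simp add: power_add[symmetric] mult.commute mult.left_commute)
qed

lemma poly_ratio_mono:
  fixes \<alpha> \<beta> :: "nat \<Rightarrow> real"
  assumes "0 \<le> x\<^sub>1" "x\<^sub>1 \<le> x\<^sub>2"
    and "(\<Sum>k=0..n. \<beta> k * x\<^sub>1 ^ k) > 0" "(\<Sum>k=0..n. \<beta> k * x\<^sub>2 ^ k) > 0"
    and coeffs: "\<And>i j. j \<le> i \<Longrightarrow> i \<le> n \<Longrightarrow> \<alpha> j * \<beta> i \<le> \<alpha> i * \<beta> j"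
  shows "(\<Sum>k=0..n. \<alpha> k * x\<^sub>1 ^ k) / (\<Sum>k=0..n. \<beta> k * x\<^sub>1 ^ k)
       \<le> (\<Sum>k=0..n. \<alpha> k * x\<^sub>2 ^ k) / (\<Sum>k=0..n. \<beta> k * x\<^sub>2 ^ k)"
proof -
  define h where "h i j = \<alpha> i * \<beta> j * (x\<^sub>1 ^ i * x\<^sub>2 ^ j - x\<^sub>2 ^ i * x\<^sub>1 ^ j)" for i j
  have h_sym_nonpos: "h i j + h j i \<le> 0" if "i \<le> n" "j \<le> n" for i j
  proof -
    have factored: "h i j + h j i = (\<alpha> i * \<beta> j - \<alpha> j * \<beta> i) * (x\<^sub>1 ^ i * x\<^sub>2 ^ j - x\<^sub>1 ^ j * x\<^sub>2 ^ i)"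
      unfolding h_def by (simp add: algebra_simps)
    show ?thesis
    proof (cases "j \<le> i")
      case True
      then show ?thesis
        unfolding factored using coeffs[OF True that(1)] power_mult_power_swap_le[OF assms(1,2) True]
        by (intro mult_nonneg_nonpos) auto
    next
      case False
      then have "i \<le> j" by simp
      then show ?thesis
        unfolding factored using coeffs[OF \<open>i \<le> j\<close> that(2)] power_mult_power_swap_le[OF assms(1,2) \<open>i \<le> j\<close>]
        by (intro mult_nonpos_nonneg) auto
    qed
  qed
  define S where "S = (\<Sum>i=0..n. \<Sum>j=0..n. h i j)"
  have "2 * S = (\<Sum>i=0..n. \<Sum>j=0..n. h i j + h j i)"
    by (subst mult_2, subst (2) S_def, subst sum.swap) (simp add: S_def sum.distrib)
  also have "\<dots> \<le> 0" by (intro sum_nonpos) (simp add: h_sym_nonpos)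
  finally have "S \<le> 0" by simp
  moreover have "(\<Sum>k=0..n. \<alpha> k * x\<^sub>1 ^ k) * (\<Sum>k=0..n. \<beta> k * x\<^sub>2 ^ k)
               - (\<Sum>k=0..n. \<alpha> k * x\<^sub>2 ^ k) * (\<Sum>k=0..n. \<beta> k * x\<^sub>1 ^ k) = S"
    unfolding S_def h_def sum_product sum_subtractf[symmetric]
    by (intro sum.cong refl) (simp add: algebra_simps)
  ultimately show ?thesis using assms(3,4) by (simp add: divide_simps)
qed

lemma mono_on_prod_plus_ratio:
  fixes a b :: "nat \<Rightarrow> real"
  assumes apos: "\<forall>k\<in>{1..q}. a k > 0" and bpos: "\<forall>k\<in>{1..q}. b k > 0"
    and ratios: "\<And>m. m < q \<Longrightarrow> esym q m b / esym q m a \<le> esym q (Suc m) b / esym q (Suc m) a"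
  shows "mono_on {0<..} (\<lambda>x. (\<Prod>k=1..q. a k + x) / (\<Prod>k=1..q. b k + x))"
proof (rule mono_onI)
  define \<alpha> where "\<alpha> k = esym q (q - k) a" for k
  define \<beta> where "\<beta> k = esym q (q - k) b" for k
  have coeffs: "\<alpha> j * \<beta> i \<le> \<alpha> i * \<beta> j" if "j \<le> i" "i \<le> q" for i j
  proof -
    have "esym q (q - i) b / esym q (q - i) a \<le> esym q (q - j) b / esym q (q - j) a"
      by (rule lift_Suc_mono_le_ivl[where N = "{..<q}"]) (use ratios that in auto)
    then show ?thesis
      using esym_pos[OF apos, of "q - i"] esym_pos[OF apos, of "q - j"]
      by (simp add: \<alpha>_def \<beta>_def divide_simps mult.commute)
  qed
  fix x\<^sub>1 x\<^sub>2 :: real assume x: "x\<^sub>1 \<in> {0<..}" "x\<^sub>2 \<in> {0<..}" "x\<^sub>1 \<le> x\<^sub>2"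
  show "(\<Prod>k=1..q. a k + x\<^sub>1) / (\<Prod>k=1..q. b k + x\<^sub>1)
           \<le> (\<Prod>k=1..q. a k + x\<^sub>2) / (\<Prod>k=1..q. b k + x\<^sub>2)"
    using x prod_plus_pos[OF bpos] unfolding prod_plus_eq_sum_esym \<alpha>_def[symmetric] \<beta>_def[symmetric]
    by (intro poly_ratio_mono coeffs) auto
qed

theorem lemma2:
  fixes q :: nat and a b :: "nat \<Rightarrow> real"
  assumes apos: "\<forall>k\<in>{1..q}. a k > 0"
    and bpos: "\<forall>k\<in>{1..q}. b k > 0"
  defines "R \<equiv> (\<lambda>x::real. (\<Prod>k=1..q. a k + x) / (\<Prod>k=1..q. b k + x))"
  shows "((\<forall>m\<in>{1..<q}. esym q (Suc m) b / esym q (Suc m) a \<ge> esym q m b / esym q m a)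
            \<and> esym q 1 b / esym q 1 a \<ge> 1
          \<longrightarrow> mono_on {0<..} R)
       \<and> ((\<forall>m\<in>{1..<q}. esym q (Suc m) b / esym q (Suc m) a \<le> esym q m b / esym q m a)
            \<and> esym q 1 b / esym q 1 a \<le> 1
          \<longrightarrow> antimono_on {0<..} R)"
proof (intro conjI impI)
  assume "(\<forall>m\<in>{1..<q}. esym q (Suc m) b / esym q (Suc m) a \<ge> esym q m b / esym q m a)
            \<and> esym q 1 b / esym q 1 a \<ge> 1"
  then have "esym q m b / esym q m a \<le> esym q (Suc m) b / esym q (Suc m) a" if "m < q" for m
    using that by (cases "m = 0") auto
  then show "mono_on {0<..} R"
    unfolding R_def by (rule mono_on_prod_plus_ratio[OF apos bpos])
next
  assume decr: "(\<forall>m\<in>{1..<q}. esym q (Suc m) b / esym q (Suc m) a \<le> esym q m b / esym q m a)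
            \<and> esym q 1 b / esym q 1 a \<le> 1"
  have "esym q m a / esym q m b \<le> esym q (Suc m) a / esym q (Suc m) b" if "m < q" for m
  proof -
    have "esym q (Suc m) b / esym q (Suc m) a \<le> esym q m b / esym q m a"
      using decr that by (cases "m = 0") auto
    then show ?thesis
      using that esym_pos[OF apos, of m] esym_pos[OF bpos, of m]
        esym_pos[OF apos, of "Suc m"] esym_pos[OF bpos, of "Suc m"]
      by (simp add: divide_simps mult.commute)
  qed
  then have inverse_mono: "mono_on {0<..} (\<lambda>x. (\<Prod>k=1..q. b k + x) / (\<Prod>k=1..q. a k + x))"
    by (rule mono_on_prod_plus_ratio[OF bpos apos])
  show "antimono_on {0<..} R"
  proof (rule monotone_onI)
    fix x\<^sub>1 x\<^sub>2 :: real assume x: "x\<^sub>1 \<in> {0<..}" "x\<^sub>2 \<in> {0<..}" "x\<^sub>1 \<le> x\<^sub>2"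
    then show "R x\<^sub>2 \<le> R x\<^sub>1"
      using mono_onD[OF inverse_mono x] prod_plus_pos[OF apos] prod_plus_pos[OF bpos]
      unfolding R_def by (simp add: divide_simps mult.commute)
  qed
qed

end
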